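(* Let $U=(U_1,\dots,U_n)$ be a radial solution of $$\Delta U_i+\sum_{j=1}^na_{ij}e^{U_j}=0\ \text{ in }\mathbb R^2,\qquad\int_{\mathbb R^2}e^{U_i}<\infty,\quad i\in I,$$ with $\max_{i\in I}U_i(0)=0$. Let $m_i=\frac1{2\pi}\int_{\mathbb R^2}\sum_ja_{ij}e^{U_j}dx$, $m=\min_im_i$, $\alpha_i=-U_i(0)$ and $D_i=\int_0^\infty\log r\sum_ja_{ij}e^{U_j(r)}r\,dr$. Then for some $\delta>0$, as $r\to\infty$, $$U_i(r)=-m_i\log r+D_i-\alpha_i-\sum_{j=1}^n\frac{a_{ij}}{(m_j-2)^2}e^{D_j-\alpha_j}r^{2-m_j}+O(r^{2-m-\delta}),\quad i\in I.$$
   Context: $I=\{1,\dots,n\}$. $A=(a_{ij})$ is a real $n\times n$ matrix which is symmetric, has nonnegative entries, is irreducible and invertible, and whose inverse $(a^{ij})$ satisfies $a^{ii}\le0$, $a^{ij}\ge0$ for $i\ne j$, and $\sum_ja^{ij}\ge0$. *)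

theory Defs
  imports "HOL-Analysis.Analysis" "HOL-Library.Landau_Symbols"
begin

definition partial_deriv :: "2 \<Rightarrow> (real^2 \<Rightarrow> real) \<Rightarrow> real^2 \<Rightarrow> real" where
  "partial_deriv k u x = deriv (\<lambda>t. u (x + t *\<^sub>R axis k 1)) 0"

definition laplacian :: "(real^2 \<Rightarrow> real) \<Rightarrow> real^2 \<Rightarrow> real" where
  "laplacian u x = (\<Sum>k\<in>UNIV. partial_deriv k (partial_deriv k u) x)"

definition C2_plane :: "(real^2 \<Rightarrow> real) \<Rightarrow> bool" where
  "C2_plane u \<longleftrightarrow> (\<exists>(g :: real^2 \<Rightarrow> real^2) (H :: real^2 \<Rightarrow> real^2^2).
      (\<forall>x. (u has_derivative (\<lambda>h. g x \<bullet> h)) (at x)) \<and>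
      (\<forall>x. (g has_derivative (\<lambda>h. H x *v h)) (at x)) \<and>
      continuous_on UNIV H)"

definition irreducible_matrix :: "real^'n^'n \<Rightarrow> bool" where
  "irreducible_matrix A \<longleftrightarrow>
     (\<forall>J. J \<noteq> {} \<and> J \<noteq> UNIV \<longrightarrow> (\<exists>i\<in>J. \<exists>j. j \<notin> J \<and> A $ i $ j \<noteq> 0))"

end

(*
  Write f_i = sum_j a_ij e^(U_j) and M_i(r) = int_0^r s f_i(s) ds, so that M_i(r) -> m_i.
  Integrating the radial equation (r U_i')' = -r f_i once and then against log gives
  r U_i'(r) = -M_i(r) and U_i(r) = U_i(0) - M_i(r) log r + int_0^r log s f_i(s) s ds.
  As M_i <= m_i, U_i + m_i log r is nondecreasing, so m_i <= 2 would give e^(U_i) >= c r^(-2),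
  contradicting finite mass; thus m > 2, and as M_i -> m_i, e^(U_i) = O(r^(-q)) for some q > 2.
  The remainder T_i = U_i - U_i(0) + m_i log r - D_i equals
  -int_r^oo (log s - log r) s f_i(s) ds, so it is nonpositive and O(r^(2-m)).
  Writing s e^(U_j(s)) = e^(D_j - alpha_j) s^(1-m_j) e^(T_j(s)) and using
  int_r^oo (log s - log r) s^(1-m_j) ds = r^(2-m_j) / (m_j-2)^2, the error of the expansion
  becomes an integral of (log s - log r) s^(1-m_j) (1 - e^(T_j(s))) <= C s^(3-2m), which is
  O(r^(4-2m)); so delta = m - 2 works.
*)

theory Submission
  imports Defs
begin

section \<open>Radial functions in the plane\<close>

lemma has_real_derivative_along_line:
  fixes F :: "'a::real_inner \<Rightarrow> real"
  assumes "(F has_derivative (\<lambda>h. G \<bullet> h)) (at (p + t0 *\<^sub>R v))"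
  shows "((\<lambda>t. F (p + t *\<^sub>R v)) has_real_derivative (G \<bullet> v)) (at t0)"
proof -
  have "((\<lambda>t. p + t *\<^sub>R v) has_derivative (\<lambda>t. t *\<^sub>R v)) (at t0)"
    by (auto intro!: derivative_eq_intros)
  from has_derivative_compose[OF this assms] show ?thesis
    unfolding has_field_derivative_def
    by (rule has_derivative_eq_rhs) (auto simp: fun_eq_iff)
qed

lemma component_has_real_derivative_along_line:
  fixes g :: "real^'m \<Rightarrow> real^'n"
  assumes "(g has_derivative (\<lambda>h. H *v h)) (at (p + t0 *\<^sub>R v))"
  shows "((\<lambda>t. g (p + t *\<^sub>R v) $ k) has_real_derivative ((H *v v) $ k)) (at t0)"
proof -
  have "((\<lambda>t. p + t *\<^sub>R v) has_derivative (\<lambda>t. t *\<^sub>R v)) (at t0)"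
    by (auto intro!: derivative_eq_intros)
  from has_derivative_compose[OF this assms]
  have "((\<lambda>t. g (p + t *\<^sub>R v)) has_derivative (\<lambda>t. H *v (t *\<^sub>R v))) (at t0)" by simp
  from bounded_linear.has_derivative[OF bounded_linear_vec_nth[of k] this]
  show ?thesis unfolding has_field_derivative_def
    by (rule has_derivative_eq_rhs) (auto simp: fun_eq_iff matrix_vector_mult_scaleR)
qed

lemma partial_deriv_eq_gradient:
  assumes "\<And>x. (u has_derivative (\<lambda>h. g x \<bullet> h)) (at x)"
  shows "partial_deriv k u x = g x $ k"
proof -
  have "((\<lambda>t. u (x + t *\<^sub>R axis k 1)) has_real_derivative (g x \<bullet> axis k 1)) (at 0)"
    by (rule has_real_derivative_along_line) (simp add: assms)
  then show ?thesis unfolding partial_deriv_def by (simp add: DERIV_imp_deriv inner_axis)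
qed

lemma laplacian_eq_Hessian_diagonal:
  assumes "\<And>x. (u has_derivative (\<lambda>h. g x \<bullet> h)) (at x)"
    and "\<And>x. (g has_derivative (\<lambda>h. H x *v h)) (at x)"
  shows "laplacian u x = (H x *v axis 1 1) $ 1 + (H x *v axis 2 1) $ 2"
proof -
  have "partial_deriv k (partial_deriv k u) x = (H x *v axis k 1) $ k" for k
  proof -
    have "((\<lambda>t. g (x + t *\<^sub>R axis k 1) $ k) has_real_derivative ((H x *v axis k 1) $ k)) (at 0)"
      by (rule component_has_real_derivative_along_line) (simp add: assms)
    then show ?thesis
      unfolding partial_deriv_def partial_deriv_eq_gradient[OF assms(1), abs_def]
      by (simp add: DERIV_imp_deriv)
  qed
  then show ?thesis unfolding laplacian_def by (simp add: sum_2)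
qed

lemma norm_axis_combination: "norm (r *\<^sub>R axis 1 1 + t *\<^sub>R axis 2 1 :: real^2) = sqrt (r^2 + t^2)"
  by (simp add: norm_vec_def L2_set_def sum_2 axis_def power2_eq_square)

lemma radial_profile_has_derivative:
  fixes V :: "real \<Rightarrow> real"
  assumes grad: "\<And>x. ((\<lambda>x::real^2. V (norm x)) has_derivative (\<lambda>h. g x \<bullet> h)) (at x)"
    and t: "t > 0"
  shows "(V has_real_derivative g (t *\<^sub>R axis 1 1) $ 1) (at t)"
proof -
  have "((\<lambda>s. V (norm (0 + s *\<^sub>R axis 1 1 :: real^2))) has_real_derivative
          g (t *\<^sub>R axis 1 1) \<bullet> axis 1 1) (at t)"
    by (rule has_real_derivative_along_line) (simp add: grad)
  then have "((\<lambda>s. V \<bar>s\<bar>) has_real_derivative g (t *\<^sub>R axis 1 1) $ 1) (at t)"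
    by (simp add: inner_axis)
  then show ?thesis
    by (rule has_field_derivative_transform_within_open[where S="{0<..}"]) (use t in auto)
qed

lemma radial_gradient_tangential:
  fixes V :: "real \<Rightarrow> real" and t :: real
  assumes grad: "\<And>x. ((\<lambda>x::real^2. V (norm x)) has_derivative (\<lambda>h. g x \<bullet> h)) (at x)"
    and r: "r > 0"
  defines "\<rho> \<equiv> sqrt (r^2 + t^2)"
  shows "g (r *\<^sub>R axis 1 1 + t *\<^sub>R axis 2 1) $ 2 = t * (g (\<rho> *\<^sub>R axis 1 1) $ 1 / \<rho>)"
proof -
  have \<rho>: "\<rho> > 0" using r by (simp add: \<rho>_def add_pos_nonneg)
  have shift: "r *\<^sub>R axis 1 1 + t *\<^sub>R axis 2 1 + s *\<^sub>R axis 2 1 =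
      r *\<^sub>R axis 1 1 + (t + s) *\<^sub>R (axis 2 1 :: real^2)" for s
    by (simp add: algebra_simps)
  have "((\<lambda>s. V (norm (r *\<^sub>R axis 1 1 + t *\<^sub>R axis 2 1 + s *\<^sub>R axis 2 1 :: real^2)))
          has_real_derivative g (r *\<^sub>R axis 1 1 + t *\<^sub>R axis 2 1) \<bullet> axis 2 1) (at 0)"
    by (rule has_real_derivative_along_line) (simp add: grad)
  then have "((\<lambda>s. V (sqrt (r^2 + (t + s)^2))) has_real_derivative
               g (r *\<^sub>R axis 1 1 + t *\<^sub>R axis 2 1) $ 2) (at 0)"
    by (simp only: shift norm_axis_combination inner_axis) simp
  moreover have "((\<lambda>s. V (sqrt (r^2 + (t + s)^2))) has_real_derivative
                   g (\<rho> *\<^sub>R axis 1 1) $ 1 * (t / \<rho>)) (at 0)"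
  proof (rule DERIV_chain2[where f=V])
    show "(V has_real_derivative g (\<rho> *\<^sub>R axis 1 1) $ 1) (at (sqrt (r^2 + (t + 0)^2)))"
      using radial_profile_has_derivative[OF grad \<rho>] by (simp add: \<rho>_def)
    show "((\<lambda>s. sqrt (r^2 + (t + s)^2)) has_real_derivative t / \<rho>) (at 0)"
      using \<rho> by (auto intro!: derivative_eq_intros simp: \<rho>_def field_simps)
  qed
  ultimately show ?thesis by (simp add: DERIV_unique mult.commute)
qed

lemma radial_Hessian_tangential:
  fixes V :: "real \<Rightarrow> real"
  assumes grad: "\<And>x. ((\<lambda>x::real^2. V (norm x)) has_derivative (\<lambda>h. g x \<bullet> h)) (at x)"
    and hess: "\<And>x. (g has_derivative (\<lambda>h. H x *v h)) (at x)"
    and r: "r > 0"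
  shows "(H (r *\<^sub>R axis 1 1) *v axis 2 1) $ 2 = g (r *\<^sub>R axis 1 1) $ 1 / r"
proof -
  define \<rho> where "\<rho> = (\<lambda>t. sqrt (r^2 + t^2))"
  define V' where "V' = (\<lambda>s. g (s *\<^sub>R axis 1 1) $ 1)"
  have \<rho>: "\<rho> t > 0" for t using r by (simp add: \<rho>_def add_pos_nonneg)
  have d\<rho>: "(\<rho> has_real_derivative t / \<rho> t) (at t)" for t
    using \<rho>[of t] by (auto intro!: derivative_eq_intros simp: \<rho>_def field_simps)
  have dV': "(V' has_real_derivative (H (s *\<^sub>R axis 1 1) *v axis 1 1) $ 1) (at s)" for s
    using component_has_real_derivative_along_line[of g "H (s *\<^sub>R axis 1 1)" 0 s "axis 1 1"] hess
    by (simp add: V'_def)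
  have "((\<lambda>t. g (r *\<^sub>R axis 1 1 + t *\<^sub>R axis 2 1) $ 2) has_real_derivative
          (H (r *\<^sub>R axis 1 1) *v axis 2 1) $ 2) (at 0)"
    by (rule component_has_real_derivative_along_line) (simp add: hess)
  moreover have "((\<lambda>t. t * (V' (\<rho> t) / \<rho> t)) has_real_derivative V' (\<rho> 0) / \<rho> 0) (at 0)"
    using \<rho>[of 0] DERIV_chain2[OF dV' d\<rho>[of 0]] d\<rho>[of 0]
    by (auto intro!: derivative_eq_intros simp: field_simps)
  moreover have "g (r *\<^sub>R axis 1 1 + t *\<^sub>R axis 2 1) $ 2 = t * (V' (\<rho> t) / \<rho> t)" for t
    unfolding V'_def \<rho>_def by (rule radial_gradient_tangential[OF grad r])
  moreover have "\<rho> 0 = r" using r by (simp add: \<rho>_def)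
  ultimately show ?thesis by (simp add: V'_def DERIV_unique)
qed

lemma radial_laplacian:
  fixes V :: "real \<Rightarrow> real"
  assumes grad: "\<And>x. ((\<lambda>x::real^2. V (norm x)) has_derivative (\<lambda>h. g x \<bullet> h)) (at x)"
    and hess: "\<And>x. (g has_derivative (\<lambda>h. H x *v h)) (at x)"
    and r: "r > 0"
  shows "((\<lambda>s. s * g (s *\<^sub>R axis 1 1) $ 1) has_real_derivative
           r * laplacian (\<lambda>x::real^2. V (norm x)) (r *\<^sub>R axis 1 1)) (at r)"
proof -
  have "((\<lambda>s. g (0 + s *\<^sub>R axis 1 1) $ 1) has_real_derivative
          (H (r *\<^sub>R axis 1 1) *v axis 1 1) $ 1) (at r)"
    by (rule component_has_real_derivative_along_line) (simp add: hess)
  then show ?thesis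
    using r by (auto intro!: derivative_eq_intros
        simp: laplacian_eq_Hessian_diagonal[OF grad hess] radial_Hessian_tangential[OF grad hess r]
              field_simps)
qed

lemma continuous_on_ln_times_id: "continuous_on {0..} (\<lambda>s::real. ln s * s)"
proof -
  have "continuous (at x within {0..}) (\<lambda>s::real. ln s * s)" if "x \<ge> 0" for x
  proof (cases "x = 0")
    case True
    have "((\<lambda>s::real. ln s * s) \<longlongrightarrow> 0) (at_right 0)" by real_asymp
    then show ?thesis using True by (simp add: continuous_within at_within_Ici_at_right)
  next
    case False
    with that have "isCont (\<lambda>s::real. ln s * s) x" by (auto intro!: continuous_intros)
    then show ?thesis by (simp add: continuous_at_imp_continuous_at_within)
  qed
  then show ?thesis by (simp add: continuous_on_eq_continuous_within)
qed

lemma flux_eq_integral: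
  fixes V' f :: "real \<Rightarrow> real"
  assumes cV': "continuous_on {0..r} V'" and r: "0 \<le> r"
    and flux: "\<And>s. 0 < s \<Longrightarrow> s < r \<Longrightarrow> ((\<lambda>s. s * V' s) has_real_derivative - (s * f s)) (at s)"
  shows "r * V' r = - integral {0..r} (\<lambda>s. s * f s)"
proof -
  have "((\<lambda>s. - (s * f s)) has_integral (r * V' r - 0 * V' 0)) {0..r}"
  proof (rule fundamental_theorem_of_calculus_interior[OF r])
    show "continuous_on {0..r} (\<lambda>s. s * V' s)" by (intro continuous_intros cV')
    show "((\<lambda>s. s * V' s) has_vector_derivative - (s * f s)) (at s)" if "s \<in> {0<..<r}" for s
      using flux that by (simp add: has_real_derivative_iff_has_vector_derivative)
  qed
  then show ?thesis by (simp add: integral_unique has_integral_neg_iff)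
qed

text \<open>\<open>V s - ln s * (s * V' s) - \<integral>\<^sub>0\<^sup>s ln t * f t * t dt\<close> has vanishing derivative
  and is continuous at \<open>0\<close> because \<open>s * ln s \<rightarrow> 0\<close>.\<close>
lemma profile_eq_integral:
  fixes V V' f :: "real \<Rightarrow> real"
  assumes dV: "\<And>s. 0 < s \<Longrightarrow> s < r \<Longrightarrow> (V has_real_derivative V' s) (at s)"
    and cV: "continuous_on {0..r} V" and cV': "continuous_on {0..r} V'"
    and cf: "continuous_on {0..r} f" and r: "0 < r"
    and flux: "\<And>s. 0 < s \<Longrightarrow> s < r \<Longrightarrow> ((\<lambda>s. s * V' s) has_real_derivative - (s * f s)) (at s)"
  shows "V r = V 0 + ln r * (r * V' r) + integral {0..r} (\<lambda>s. ln s * f s * s)"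
proof -
  define h where "h = (\<lambda>s. ln s * f s * s)"
  define \<Psi> where "\<Psi> = (\<lambda>s. V s - ln s * (s * V' s) - integral {0..s} h)"
  have cx: "continuous_on {0..r} (\<lambda>s::real. ln s * s)"
    using continuous_on_ln_times_id by (rule continuous_on_subset) auto
  have ch: "continuous_on {0..r} h"
    unfolding h_def using continuous_on_mult[OF cx cf] by (simp add: mult_ac)
  have "continuous_on {0..r} \<Psi>"
  proof -
    have "continuous_on {0..r} (\<lambda>s. V s - (ln s * s) * V' s - integral {0..s} h)"
      by (intro continuous_intros cV cx cV' indefinite_integral_continuous_1
          integrable_continuous_real ch)
    then show ?thesis by (simp add: \<Psi>_def mult_ac)
  qed
  moreover have "(\<Psi> has_real_derivative 0) (at z)" if z: "0 < z" "z < r" for z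
  proof -
    have "(ln has_real_derivative 1 / z) (at z)" using z by (auto intro!: derivative_eq_intros)
    from DERIV_mult[OF this flux[OF z]]
    have "((\<lambda>s. ln s * (s * V' s)) has_real_derivative V' z - h z) (at z)"
      using z by (simp add: h_def algebra_simps)
    moreover have "((\<lambda>s. integral {0..s} h) has_real_derivative h z) (at z)"
      using integral_has_real_derivative[OF ch, of z] at_within_interior[of z "{0..r}"] z by simp
    ultimately have "(\<Psi> has_real_derivative V' z - (V' z - h z) - h z) (at z)"
      unfolding \<Psi>_def using z by (intro DERIV_diff dV)
    then show ?thesis by simp
  qed
  ultimately have "\<Psi> r = \<Psi> 0" by (rule DERIV_isconst_end[OF r])
  then show ?thesis by (simp add: \<Psi>_def h_def)
qed

lemma continuous_on_radial_profile:
  fixes V :: "real \<Rightarrow> real"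
  assumes "C2_plane (\<lambda>x::real^2. V (norm x))"
  shows "continuous_on {0..} V"
proof -
  obtain g :: "real^2 \<Rightarrow> real^2" where "\<And>x. ((\<lambda>x::real^2. V (norm x)) has_derivative (\<lambda>h. g x \<bullet> h)) (at x)"
    using assms unfolding C2_plane_def by blast
  then have "continuous_on UNIV (\<lambda>x::real^2. V (norm x))"
    by (meson continuous_at_imp_continuous_on has_derivative_continuous)
  then have "continuous_on {0..} (\<lambda>t. V (norm (t *\<^sub>R axis 1 1 :: real^2)))"
    by (rule continuous_on_compose2) (auto intro!: continuous_intros)
  then show ?thesis by (rule continuous_on_cong[THEN iffD1, rotated 2]) auto
qed

lemma radial_solution_integral_form:
  fixes V f :: "real \<Rightarrow> real"
  assumes C2: "C2_plane (\<lambda>x::real^2. V (norm x))"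
    and eq: "\<And>x::real^2. laplacian (\<lambda>x. V (norm x)) x = - f (norm x)"
    and cf: "continuous_on {0..} f" and r: "r > 0"
  shows "(V has_real_derivative - integral {0..r} (\<lambda>s. s * f s) / r) (at r)"
    and "V r = V 0 - ln r * integral {0..r} (\<lambda>s. s * f s) + integral {0..r} (\<lambda>s. ln s * f s * s)"
proof -
  obtain g :: "real^2 \<Rightarrow> real^2" and H :: "real^2 \<Rightarrow> real^2^2" where
    grad: "\<And>x. ((\<lambda>x::real^2. V (norm x)) has_derivative (\<lambda>h. g x \<bullet> h)) (at x)" and
    hess: "\<And>x. (g has_derivative (\<lambda>h. H x *v h)) (at x)"
    using C2 unfolding C2_plane_def by blast
  define V' where "V' = (\<lambda>s. g (s *\<^sub>R axis 1 1) $ 1)"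
  have dV: "(V has_real_derivative V' s) (at s)" if "s > 0" for s
    unfolding V'_def by (rule radial_profile_has_derivative[OF grad that])
  have cV': "continuous_on {0..r} V'"
  proof (rule DERIV_continuous_on)
    show "(V' has_real_derivative (H (s *\<^sub>R axis 1 1) *v axis 1 1) $ 1) (at s within {0..r})" for s
      using component_has_real_derivative_along_line[of g "H (s *\<^sub>R axis 1 1)" 0 s "axis 1 1"] hess
      by (simp add: V'_def has_field_derivative_at_within)
  qed
  have flux: "((\<lambda>s. s * V' s) has_real_derivative - (s * f s)) (at s)" if "s > 0" for s
    using radial_laplacian[OF grad hess that] eq[of "s *\<^sub>R axis 1 1"] that by (simp add: V'_def)
  have cV: "continuous_on {0..r} V"
    using continuous_on_radial_profile[OF C2] by (rule continuous_on_subset) auto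
  have cfr: "continuous_on {0..r} f" using cf by (rule continuous_on_subset) auto
  have F: "r * V' r = - integral {0..r} (\<lambda>s. s * f s)"
    by (rule flux_eq_integral[OF cV']) (use r flux in auto)
  show "(V has_real_derivative - integral {0..r} (\<lambda>s. s * f s) / r) (at r)"
  proof -
    have "V' r = - integral {0..r} (\<lambda>s. s * f s) / r" using F r by (simp add: field_simps)
    then show ?thesis using dV[OF r] by simp
  qed
  show "V r = V 0 - ln r * integral {0..r} (\<lambda>s. s * f s) + integral {0..r} (\<lambda>s. ln s * f s * s)"
    using profile_eq_integral[OF dV cV cV' cfr r flux] by (simp add: F)
qed

section \<open>Polar integration of radial functions\<close>

lemma integrable_on_cball_radial:
  fixes F :: "real \<Rightarrow> real"
  assumes "continuous_on {0..} F"
  shows "(\<lambda>x::real^2. F (norm x)) integrable_on cball 0 r"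
proof -
  have "continuous_on (cball (0::real^2) r) (\<lambda>x. F (norm x))"
    by (rule continuous_on_compose2[OF assms]) (auto intro!: continuous_intros)
  then have "set_integrable lborel (cball (0::real^2) r) (\<lambda>x. F (norm x))"
    unfolding set_integrable_def by (intro borel_integrable_compact) auto
  then show ?thesis by (rule set_borel_integral_eq_integral(1))
qed

lemma has_integral_const_cball:
  assumes "r \<ge> 0"
  shows "((\<lambda>x::real^2. c) has_integral c * (pi * r^2)) (cball 0 r)"
proof -
  have "((\<lambda>x::real^2. 1) has_integral measure lborel (cball (0::real^2) r)) (cball 0 r)"
    by (rule has_integral_measure_lborel) (auto simp: emeasure_cball assms)
  moreover have "measure lborel (cball (0::real^2) r) = pi * r^2"
    using content_cball[OF assms, where c="0::real^2"] by (simp add: unit_ball_vol_2)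
  ultimately have "((\<lambda>x::real^2. 1) has_integral pi * r^2) (cball 0 r)" by simp
  from has_integral_mult_left[OF this, of c] show ?thesis by (simp add: mult_ac)
qed

lemma integral_annulus_radial_bound:
  fixes F :: "real \<Rightarrow> real"
  assumes cF: "continuous_on {0..} F" and ab: "0 \<le> a" "a \<le> b"
    and bnd: "\<And>s. a \<le> s \<Longrightarrow> s \<le> b \<Longrightarrow> \<bar>F s - c\<bar> \<le> e"
  shows "\<bar>integral (cball 0 b) (\<lambda>x::real^2. F (norm x)) - integral (cball 0 a) (\<lambda>x::real^2. F (norm x))
           - c * pi * (b^2 - a^2)\<bar> \<le> e * pi * (b^2 - a^2)"
proof -
  define S where "S = cball (0::real^2) b - cball 0 a"
  have neg: "negligible (cball (0::real^2) a - cball 0 b)"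
    using ab(2) by (simp add: subset_cball)
  have iF: "((\<lambda>x. F (norm x)) has_integral
      integral (cball 0 b) (\<lambda>x::real^2. F (norm x)) - integral (cball 0 a) (\<lambda>x::real^2. F (norm x))) S"
    unfolding S_def
    by (rule has_integral_setdiff[OF _ _ neg]) (auto intro: integrable_on_cball_radial[OF cF])
  have ic: "((\<lambda>x::real^2. k) has_integral k * (pi * b^2) - k * (pi * a^2)) S" for k
    unfolding S_def by (intro has_integral_setdiff neg has_integral_const_cball) (use ab in auto)
  have iFc: "((\<lambda>x. F (norm x) - c) has_integral
      integral (cball 0 b) (\<lambda>x::real^2. F (norm x)) - integral (cball 0 a) (\<lambda>x::real^2. F (norm x))
        - (c * (pi * b^2) - c * (pi * a^2))) S"
    by (intro has_integral_diff iF ic)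
  have "norm (integral S (\<lambda>x. F (norm x) - c)) \<le> integral S (\<lambda>x. e)"
  proof (rule integral_norm_bound_integral)
    show "(\<lambda>x. F (norm x) - c) integrable_on S" using iFc by blast
    show "(\<lambda>x. e) integrable_on S" using ic by blast
    show "norm (F (norm x) - c) \<le> e" if "x \<in> S" for x
      using that bnd by (auto simp: S_def)
  qed
  then show ?thesis
    using integral_unique[OF iFc] integral_unique[OF ic[of e]] by (simp add: right_diff_distrib mult.assoc)
qed

lemma integral_radial_weight_bound:
  fixes F :: "real \<Rightarrow> real"
  assumes cF: "continuous_on {a..b} F" and ab: "0 \<le> a" "a \<le> b"
    and bnd: "\<And>s. a \<le> s \<Longrightarrow> s \<le> b \<Longrightarrow> \<bar>F s - c\<bar> \<le> e"
  shows "\<bar>integral {a..b} (\<lambda>s. s * F s) - c * (b^2 - a^2) / 2\<bar> \<le> e * (b^2 - a^2) / 2"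
proof -
  have ilin: "((\<lambda>s. s * k) has_integral k * (b^2 - a^2) / 2) {a..b}" for k
  proof -
    have "((\<lambda>s. s * k) has_integral (\<lambda>s. k * s^2 / 2) b - (\<lambda>s. k * s^2 / 2) a) {a..b}"
      by (rule fundamental_theorem_of_calculus[OF ab(2)])
         (auto intro!: derivative_eq_intros simp: has_real_derivative_iff_has_vector_derivative[symmetric])
    then show ?thesis by (simp add: right_diff_distrib diff_divide_distrib)
  qed
  have iF: "((\<lambda>s. s * F s - s * c) has_integral integral {a..b} (\<lambda>s. s * F s) - c * (b^2 - a^2) / 2) {a..b}"
    by (intro has_integral_diff ilin integrable_integral integrable_continuous_real
        continuous_intros cF)
  have "norm (integral {a..b} (\<lambda>s. s * F s - s * c)) \<le> integral {a..b} (\<lambda>s. s * e)"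
  proof (rule integral_norm_bound_integral)
    show "(\<lambda>s. s * F s - s * c) integrable_on {a..b}" using iF by blast
    show "(\<lambda>s. s * e) integrable_on {a..b}" using ilin by blast
    show "norm (s * F s - s * c) \<le> s * e" if "s \<in> {a..b}" for s
    proof -
      have "norm (s * F s - s * c) = s * \<bar>F s - c\<bar>"
        using that ab by (simp add: abs_mult right_diff_distrib[symmetric])
      also have "\<dots> \<le> s * e" using bnd that ab by (auto intro: mult_left_mono)
      finally show ?thesis .
    qed
  qed
  then show ?thesis by (metis integral_unique[OF iF] integral_unique[OF ilin] real_norm_def)
qed

definition polar_defect :: "(real \<Rightarrow> real) \<Rightarrow> real \<Rightarrow> real" where
  "polar_defect F R =
     integral (cball (0::real^2) R) (\<lambda>x. F (norm x)) - 2 * pi * integral {0..R} (\<lambda>s. s * F s)"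

lemma polar_defect_diff_bound_ordered:
  fixes F :: "real \<Rightarrow> real"
  assumes cF: "continuous_on {0..} F" and ab: "0 \<le> a" "a \<le> b"
    and bnd: "\<And>s. a \<le> s \<Longrightarrow> s \<le> b \<Longrightarrow> \<bar>F s - c\<bar> \<le> e"
  shows "\<bar>polar_defect F b - polar_defect F a\<bar> \<le> 2 * e * pi * (b^2 - a^2)"
proof -
  let ?X = "integral (cball 0 b) (\<lambda>x::real^2. F (norm x)) - integral (cball 0 a) (\<lambda>x::real^2. F (norm x))
             - c * pi * (b^2 - a^2)"
  let ?Y = "integral {a..b} (\<lambda>s. s * F s) - c * (b^2 - a^2) / 2"
  have cs: "continuous_on {0..b} (\<lambda>s. s * F s)"
    using cF by (auto intro!: continuous_intros intro: continuous_on_subset)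
  have split: "integral {0..b} (\<lambda>s. s * F s) = integral {0..a} (\<lambda>s. s * F s) + integral {a..b} (\<lambda>s. s * F s)"
    by (rule Henstock_Kurzweil_Integration.integral_combine[symmetric])
       (use ab cs in \<open>auto intro: integrable_continuous_real\<close>)
  then have "polar_defect F b - polar_defect F a = ?X - 2 * pi * ?Y"
    unfolding polar_defect_def split by (simp add: field_simps)
  then have "\<bar>polar_defect F b - polar_defect F a\<bar> \<le> \<bar>?X\<bar> + \<bar>2 * pi * ?Y\<bar>"
    by (simp only: abs_triangle_ineq4)
  also have "\<dots> = \<bar>?X\<bar> + 2 * pi * \<bar>?Y\<bar>" by (simp add: abs_mult)
  also have "\<dots> \<le> e * pi * (b^2 - a^2) + 2 * pi * (e * (b^2 - a^2) / 2)"
  proof (intro add_mono mult_left_mono)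
    show "\<bar>?X\<bar> \<le> e * pi * (b^2 - a^2)" by (rule integral_annulus_radial_bound[OF cF ab bnd])
    have "continuous_on {a..b} F" using cF ab by (auto intro: continuous_on_subset)
    then show "\<bar>?Y\<bar> \<le> e * (b^2 - a^2) / 2" by (rule integral_radial_weight_bound[OF _ ab bnd])
  qed auto
  also have "\<dots> = 2 * e * pi * (b^2 - a^2)" by (simp add: field_simps)
  finally show ?thesis .
qed

lemma polar_defect_diff_bound:
  fixes F :: "real \<Rightarrow> real"
  assumes cF: "continuous_on {0..} F" and xy: "0 \<le> x" "0 \<le> y"
    and bnd: "\<And>s. min x y \<le> s \<Longrightarrow> s \<le> max x y \<Longrightarrow> \<bar>F s - c\<bar> \<le> e"
  shows "\<bar>polar_defect F y - polar_defect F x\<bar> \<le> 2 * e * pi * \<bar>y^2 - x^2\<bar>"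
proof (cases "x \<le> y")
  case True
  have "\<bar>polar_defect F y - polar_defect F x\<bar> \<le> 2 * e * pi * (y^2 - x^2)"
    by (rule polar_defect_diff_bound_ordered[OF cF xy(1) True]) (use bnd True in auto)
  moreover have "x^2 \<le> y^2" using True xy by (simp add: power_mono)
  ultimately show ?thesis by simp
next
  case False
  have "\<bar>polar_defect F x - polar_defect F y\<bar> \<le> 2 * e * pi * (x^2 - y^2)"
    by (rule polar_defect_diff_bound_ordered[OF cF xy(2)]) (use bnd False in auto)
  moreover have "y^2 \<le> x^2" using False xy by (simp add: power_mono)
  ultimately show ?thesis by (simp add: abs_minus_commute)
qed

lemma polar_defect_has_derivative_zero:
  fixes F :: "real \<Rightarrow> real"
  assumes cF: "continuous_on {0..} F" and z: "z \<ge> 0"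
  shows "(polar_defect F has_derivative (\<lambda>h. 0)) (at z within {0..})"
  unfolding has_derivative_within_alt
proof (intro conjI allI impI bounded_linear_zero)
  fix \<epsilon> :: real assume \<epsilon>: "\<epsilon> > 0"
  define e where "e = \<epsilon> / (2 * pi * (2 * z + 1))"
  have e: "e > 0" using \<epsilon> z by (simp add: e_def)
  obtain \<delta> where \<delta>: "\<delta> > 0" and \<delta>F: "\<And>s. s \<in> {0..} \<Longrightarrow> dist s z < \<delta> \<Longrightarrow> dist (F s) (F z) < e"
    using cF z e unfolding continuous_on_iff by (metis atLeast_iff)
  show "\<exists>d>0. \<forall>y\<in>{0..}. norm (y - z) < d \<longrightarrow>
          norm (polar_defect F y - polar_defect F z - 0) \<le> \<epsilon> * norm (y - z)"
  proof (intro exI[of _ "min \<delta> 1"] conjI ballI impI)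
    fix y :: real assume y: "y \<in> {0..}" and yz: "norm (y - z) < min \<delta> 1"
    have "\<bar>polar_defect F y - polar_defect F z\<bar> \<le> 2 * e * pi * \<bar>y^2 - z^2\<bar>"
    proof (rule polar_defect_diff_bound[OF cF z])
      show "\<bar>F s - F z\<bar> \<le> e" if "min z y \<le> s" "s \<le> max z y" for s
      proof -
        have "s \<in> {0..}" "dist s z < \<delta>"
          using that y yz z by (auto simp: dist_real_def)
        then show ?thesis using \<delta>F[of s] by (simp add: dist_real_def)
      qed
    qed (use y in auto)
    also have "\<bar>y^2 - z^2\<bar> = \<bar>y - z\<bar> * (y + z)"
    proof -
      have "y^2 - z^2 = (y - z) * (y + z)" by (simp add: power2_eq_square algebra_simps)
      then show ?thesis using y z by (simp add: abs_mult)
    qed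
    also have "2 * e * pi * (\<bar>y - z\<bar> * (y + z)) \<le> 2 * e * pi * (\<bar>y - z\<bar> * (2 * z + 1))"
      using yz e by (intro mult_left_mono) auto
    also have "\<dots> = (2 * e * pi * (2 * z + 1)) * \<bar>y - z\<bar>" by (simp add: mult_ac)
    also have "2 * e * pi * (2 * z + 1) = \<epsilon>"
      using z by (simp add: e_def add_pos_nonneg)
    finally show "norm (polar_defect F y - polar_defect F z - 0) \<le> \<epsilon> * norm (y - z)" by simp
  qed (use \<delta> in auto)
qed

lemma integral_cball_radial:
  fixes F :: "real \<Rightarrow> real"
  assumes cF: "continuous_on {0..} F" and R: "R \<ge> 0"
  shows "integral (cball (0::real^2) R) (\<lambda>x. F (norm x)) = 2 * pi * integral {0..R} (\<lambda>s. s * F s)"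
proof -
  obtain c where "\<forall>x\<in>{0..}. polar_defect F x = c"
    using has_derivative_zero_constant[OF convex_real_interval(1)]
          polar_defect_has_derivative_zero[OF cF] by (metis atLeast_iff)
  then have "polar_defect F R = polar_defect F 0" using R by simp
  then show ?thesis by (simp add: polar_defect_def)
qed

lemma integral_radial_tendsto:
  fixes F :: "real \<Rightarrow> real"
  assumes cF: "continuous_on {0..} F" and F0: "\<And>s. s \<ge> 0 \<Longrightarrow> F s \<ge> 0"
    and int: "(\<lambda>x::real^2. F (norm x)) integrable_on UNIV"
  shows "(\<lambda>n. 2 * pi * integral {0..real n} (\<lambda>s. s * F s)) \<longlonglongrightarrow> integral UNIV (\<lambda>x::real^2. F (norm x))"
proof -
  define f where "f k x = (if x \<in> cball 0 (real k) then F (norm x) else 0)" for k and x :: "real^2"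
  have "(\<lambda>k. integral UNIV (f k)) \<longlonglongrightarrow> integral UNIV (\<lambda>x::real^2. F (norm x))"
  proof (rule dominated_convergence(2)[OF _ int])
    show "f k integrable_on UNIV" for k
      unfolding f_def integrable_restrict_UNIV by (rule integrable_on_cball_radial[OF cF])
    show "norm (f k x) \<le> F (norm x)" for k x
      using F0[of "norm x"] by (simp add: f_def)
    show "(\<lambda>k. f k x) \<longlonglongrightarrow> F (norm x)" for x
    proof (rule tendsto_eventually)
      obtain N :: nat where "norm x \<le> real N" using real_arch_simple by blast
      then have "\<forall>k\<ge>N. f k x = F (norm x)" by (auto simp: f_def)
      then show "\<forall>\<^sub>F k in sequentially. f k x = F (norm x)"
        unfolding eventually_sequentially by blast
    qed
  qed
  moreover have "integral UNIV (f k) = 2 * pi * integral {0..real k} (\<lambda>s. s * F s)" for k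
    unfolding f_def integral_restrict_UNIV by (rule integral_cball_radial[OF cF]) simp
  ultimately show ?thesis by simp
qed

lemma integral_radial_le:
  fixes F :: "real \<Rightarrow> real"
  assumes cF: "continuous_on {0..} F" and F0: "\<And>s. s \<ge> 0 \<Longrightarrow> F s \<ge> 0"
    and int: "(\<lambda>x::real^2. F (norm x)) integrable_on UNIV" and R: "R \<ge> 0"
  shows "2 * pi * integral {0..R} (\<lambda>s. s * F s) \<le> integral UNIV (\<lambda>x::real^2. F (norm x))"
proof -
  have "integral (cball (0::real^2) R) (\<lambda>x. F (norm x)) \<le> integral UNIV (\<lambda>x::real^2. F (norm x))"
    by (rule integral_subset_le) (use integrable_on_cball_radial[OF cF] int F0 in auto)
  then show ?thesis using integral_cball_radial[OF cF R] by simp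
qed

section \<open>Improper and logarithmically weighted integrals\<close>

lemma powr_decay_integrable_majorant:
  fixes h :: "real \<Rightarrow> real"
  assumes ch: "continuous_on {0..} h" and p: "p > 0" and R: "R > 0"
    and decay: "\<And>s. s \<ge> R \<Longrightarrow> \<bar>h s\<bar> \<le> K * s powr (-1 - p)"
  obtains g where "g integrable_on {0..}" and "\<And>s. s \<ge> 0 \<Longrightarrow> \<bar>h s\<bar> \<le> g s"
proof -
  have "bounded (h ` {0..R})"
    by (rule compact_imp_bounded, rule compact_continuous_image) (use ch in \<open>auto intro: continuous_on_subset\<close>)
  then obtain B where B: "\<And>s. s \<in> {0..R} \<Longrightarrow> \<bar>h s\<bar> \<le> B"
    unfolding bounded_iff by (metis image_eqI real_norm_def)
  define g where "g s = (if s \<in> {..R} then B else 0) + (if s \<in> {R..} then K * s powr (-1 - p) else 0)"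
    for s
  have "(\<lambda>s. if s \<in> {..R} then B else 0) integrable_on {0..}"
  proof -
    have "{..R} \<inter> {0..} = {0..R}" by auto
    then show ?thesis unfolding integrable_restrict_Int by (simp add: integrable_const_ivl)
  qed
  moreover have "(\<lambda>s. if s \<in> {R..} then K * s powr (-1 - p) else 0) integrable_on {0..}"
  proof -
    have "(\<lambda>s. s powr (-1 - p)) integrable_on {R..}"
      using has_integral_powr_to_inf[of "-1 - p" R] p R by (auto simp: integrable_on_def)
    moreover have "{R..} \<inter> {0..} = {R..}" using R by auto
    ultimately show ?thesis
      unfolding integrable_restrict_Int
      using integrable_on_cmult_left[of "\<lambda>s. s powr (-1 - p)" "{R..}" K] by simp
  qed
  ultimately have "g integrable_on {0..}" unfolding g_def by (rule integrable_add)
  moreover have "\<bar>h s\<bar> \<le> g s" if "s \<ge> 0" for s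
  proof (cases "s \<le> R")
    case True
    have "0 \<le> K * s powr (-1 - p)" if "s \<ge> R" using decay[OF that] by linarith
    then show ?thesis using B[of s] True that by (force simp: g_def)
  next
    case False
    have "0 \<le> B" using B[of 0] R by auto
    then show ?thesis using decay[of s] False by (simp add: g_def)
  qed
  ultimately show ?thesis by (rule that)
qed

lemma integral_Icc_tendsto_integral_Ioi:
  fixes h g :: "real \<Rightarrow> real"
  assumes ch: "continuous_on {0..} h" and g: "g integrable_on {0..}"
    and dom: "\<And>s. s \<ge> 0 \<Longrightarrow> \<bar>h s\<bar> \<le> g s"
  shows "(\<lambda>n. integral {0..real n} h) \<longlonglongrightarrow> integral {0<..} h"
proof -
  define hn where "hn n s = (if s \<in> {..real n} then h s else 0)" for n :: nat and s
  have Icc: "{..real n} \<inter> {0..} = {0..real n}" for n by auto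
  have "(\<lambda>n. integral {0..} (hn n)) \<longlonglongrightarrow> integral {0..} h"
  proof (rule dominated_convergence(2)[OF _ g])
    show "hn n integrable_on {0..}" for n
      unfolding hn_def integrable_restrict_Int Icc
      by (intro integrable_continuous_real continuous_on_subset[OF ch]) auto
    show "norm (hn n s) \<le> g s" if "s \<in> {0..}" for n s
      using dom[of s] that by (auto simp: hn_def)
    show "(\<lambda>n. hn n s) \<longlonglongrightarrow> h s" for s
    proof (rule tendsto_eventually)
      obtain N :: nat where "s \<le> real N" using real_arch_simple by blast
      then have "\<forall>n\<ge>N. hn n s = h s" by (auto simp: hn_def)
      then show "\<forall>\<^sub>F n in sequentially. hn n s = h s" unfolding eventually_sequentially by blast
    qed
  qed
  moreover have "integral {0..} (hn n) = integral {0..real n} h" for n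
    unfolding hn_def integral_restrict_Int Icc by simp
  moreover have "integral {0..} h = integral {0<..} h"
    by (rule integral_spike_set; rule negligible_subset[of "{0}"]) auto
  ultimately show ?thesis by simp
qed

lemma log_powr_has_integral:
  fixes p r n :: real
  assumes p: "p > 0" and r: "r > 0" and rn: "r \<le> n"
  shows "((\<lambda>s. (ln s - ln r) * s powr (-1 - p)) has_integral
           r powr (-p) / p^2 - (ln n - ln r) * n powr (-p) / p - n powr (-p) / p^2) {r..n}"
proof -
  define \<Phi> where "\<Phi> = (\<lambda>s. - (ln s - ln r) * s powr (-p) / p - s powr (-p) / p^2)"
  have d: "(\<Phi> has_real_derivative (ln s - ln r) * s powr (-1 - p)) (at s)" if s: "s > 0" for s
  proof -
    have e1: "s powr (-p - 1) = s powr (-p) / s" using s by (simp add: powr_diff)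
    have "-1 - p = -p - 1" by simp
    then have e2: "s powr (-1 - p) = s powr (-p) / s" using e1 by metis
    show ?thesis
      unfolding \<Phi>_def using s p
      by (auto intro!: derivative_eq_intros simp: e1 e2 field_simps power2_eq_square)
  qed
  have "((\<lambda>s. (ln s - ln r) * s powr (-1 - p)) has_integral \<Phi> n - \<Phi> r) {r..n}"
    by (rule fundamental_theorem_of_calculus[OF rn])
       (use r d in \<open>auto simp: has_real_derivative_iff_has_vector_derivative[symmetric]
                         intro: has_field_derivative_at_within\<close>)
  moreover have "\<Phi> n - \<Phi> r = r powr (-p) / p^2 - (ln n - ln r) * n powr (-p) / p - n powr (-p) / p^2"
    using p by (simp add: \<Phi>_def field_simps)
  ultimately show ?thesis by simp
qed

lemma log_powr_integral_tendsto:
  fixes p r :: real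
  assumes p: "p > 0" and r: "r > 0"
  shows "(\<lambda>n. integral {r..real n} (\<lambda>s. (ln s - ln r) * s powr (-1 - p))) \<longlonglongrightarrow> r powr (-p) / p^2"
proof -
  have "((\<lambda>x. r powr (-p) / p^2 - (ln x - ln r) * x powr (-p) / p - x powr (-p) / p^2)
           \<longlongrightarrow> r powr (-p) / p^2) at_top"
    using p by real_asymp
  then have "(\<lambda>n. r powr (-p) / p^2 - (ln (real n) - ln r) * real n powr (-p) / p - real n powr (-p) / p^2)
               \<longlonglongrightarrow> r powr (-p) / p^2"
    by (rule filterlim_compose[OF _ filterlim_real_sequentially])
  moreover obtain N :: nat where N: "r \<le> real N" using real_arch_simple by blast
  have "\<forall>n\<ge>N. r powr (-p) / p^2 - (ln (real n) - ln r) * real n powr (-p) / p - real n powr (-p) / p^2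
                   = integral {r..real n} (\<lambda>s. (ln s - ln r) * s powr (-1 - p))"
  proof (intro allI impI)
    fix n assume "N \<le> n"
    with N have "r \<le> real n" by linarith
    from integral_unique[OF log_powr_has_integral[OF p r this]] show "r powr (-p) / p^2 - (ln (real n) - ln r) * real n powr (-p) / p - real n powr (-p) / p^2
                   = integral {r..real n} (\<lambda>s. (ln s - ln r) * s powr (-1 - p))" by simp
  qed
  then have "\<forall>\<^sub>F n in sequentially. r powr (-p) / p^2 - (ln (real n) - ln r) * real n powr (-p) / p
              - real n powr (-p) / p^2 = integral {r..real n} (\<lambda>s. (ln s - ln r) * s powr (-1 - p))"
    unfolding eventually_sequentially by blast
  ultimately show ?thesis by (rule Lim_transform_eventually)
qed

lemma log_weighted_tail_bounds:
  fixes \<phi> :: "real \<Rightarrow> real"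
  assumes p: "p > 0" and r: "r > 0" and c\<phi>: "continuous_on {r..} \<phi>"
    and bnd: "\<And>s. s \<ge> r \<Longrightarrow> 0 \<le> \<phi> s \<and> \<phi> s \<le> c * ((ln s - ln r) * s powr (-1 - p))"
    and lim: "(\<lambda>n. integral {r..real n} \<phi>) \<longlonglongrightarrow> L"
  shows "0 \<le> L" and "L \<le> c * (r powr (-p) / p^2)"
proof -
  have int: "\<phi> integrable_on {r..real n}" for n
    by (intro integrable_continuous_real continuous_on_subset[OF c\<phi>]) auto
  show "0 \<le> L"
  proof (rule LIMSEQ_le_const[OF lim], intro exI allI impI)
    show "0 \<le> integral {r..real n} \<phi>" for n
      using bnd by (intro integral_nonneg[OF int]) auto
  qed
  have "(\<lambda>n. integral {r..real n} (\<lambda>s. c * ((ln s - ln r) * s powr (-1 - p))))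
          \<longlonglongrightarrow> c * (r powr (-p) / p^2)"
    using tendsto_mult_left[OF log_powr_integral_tendsto[OF p r], of c] by simp
  moreover have "integral {r..real n} \<phi> \<le> integral {r..real n} (\<lambda>s. c * ((ln s - ln r) * s powr (-1 - p)))"
    for n
  proof (rule integral_le[OF int])
    show "(\<lambda>s. c * ((ln s - ln r) * s powr (-1 - p))) integrable_on {r..real n}"
      using r by (intro integrable_continuous_real continuous_intros) auto
  qed (use bnd in auto)
  ultimately show "L \<le> c * (r powr (-p) / p^2)"
    by (intro LIMSEQ_le[OF lim]) auto
qed

lemma integral_Icc_unbounded_of_inverse_lower_bound:
  fixes g :: "real \<Rightarrow> real"
  assumes cg: "continuous_on {0..} g" and g0: "\<And>s. s \<ge> 0 \<Longrightarrow> g s \<ge> 0" and c: "c > 0"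
    and low: "\<And>s. s \<ge> 1 \<Longrightarrow> c / s \<le> g s"
  shows "\<exists>R\<ge>0. B < integral {0..R} g"
proof -
  define R where "R = exp (\<bar>B\<bar> / c + 1)"
  have R1: "R \<ge> 1" using c by (simp add: R_def)
  have cgR: "continuous_on {0..R} g" using cg by (rule continuous_on_subset) auto
  have "((\<lambda>s. c / s) has_integral c * ln R - c * ln 1) {1..R}"
  proof (rule fundamental_theorem_of_calculus[OF R1])
    show "((\<lambda>s. c * ln s) has_vector_derivative c / s) (at s within {1..R})" if "s \<in> {1..R}" for s
      using that by (auto intro!: derivative_eq_intros simp: field_simps
          simp flip: has_real_derivative_iff_has_vector_derivative)
  qed
  then have "c * ln R \<le> integral {1..R} g"
    using low by (intro has_integral_le[OF _ integrable_integral]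
        integrable_continuous_real continuous_on_subset[OF cgR]) auto
  also have "\<dots> \<le> integral {0..R} g"
    using g0 by (intro integral_subset_le integrable_continuous_real continuous_on_subset[OF cgR]) auto
  finally have "c * ln R \<le> integral {0..R} g" .
  moreover have "c * ln R = \<bar>B\<bar> + c" using c by (simp add: R_def field_simps)
  then have "B < c * ln R" using c by linarith
  ultimately show ?thesis using R1 by (intro exI[of _ R]) auto
qed

section \<open>Radial solutions of Liouville systems\<close>

locale radial_Liouville_system =
  fixes A :: "real^'n^'n" and U :: "'n \<Rightarrow> real \<Rightarrow> real"
  assumes coeff_nonneg: "\<And>i j. A $ i $ j \<ge> 0"
    and C2: "\<And>i. C2_plane (\<lambda>x. U i (norm x))"
    and equation: "\<And>i x. laplacian (\<lambda>y. U i (norm y)) x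
                      + (\<Sum>j\<in>UNIV. A $ i $ j * exp (U j (norm x))) = 0"
    and finite_mass: "\<And>i. (\<lambda>x::real^2. exp (U i (norm x))) integrable_on UNIV"
begin

definition source :: "'n \<Rightarrow> real \<Rightarrow> real" where
  "source i s = (\<Sum>j\<in>UNIV. A $ i $ j * exp (U j s))"

definition mass :: "'n \<Rightarrow> real \<Rightarrow> real" where
  "mass i r = integral {0..r} (\<lambda>s. s * source i s)"

definition log_moment :: "'n \<Rightarrow> real \<Rightarrow> real" where
  "log_moment i r = integral {0..r} (\<lambda>s. ln s * source i s * s)"

definition total_mass :: "'n \<Rightarrow> real" where
  "total_mass i = 1 / (2 * pi) * integral UNIV (\<lambda>x::real^2. source i (norm x))"

definition total_log_moment :: "'n \<Rightarrow> real" where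
  "total_log_moment i = integral {0<..} (\<lambda>s. ln s * source i s * s)"

lemma source_nonneg: "0 \<le> source i s"
  unfolding source_def using coeff_nonneg by (intro sum_nonneg) auto

lemma continuous_on_U: "continuous_on {0..} (U i)"
  by (rule continuous_on_radial_profile[OF C2])

lemma continuous_on_exp_U: "continuous_on {0..} (\<lambda>s. exp (U i s))"
  by (rule continuous_on_compose2[OF continuous_on_exp continuous_on_U]) auto

lemma continuous_on_source: "continuous_on {0..} (source i)"
  unfolding source_def by (intro continuous_intros continuous_on_exp_U)

lemma source_integrable: "(\<lambda>x::real^2. source i (norm x)) integrable_on UNIV"
  unfolding source_def
proof (intro integrable_sum)
  show "(\<lambda>x::real^2. A $ i $ j * exp (U j (norm x))) integrable_on UNIV" for j
    using integrable_on_cmult_left[OF finite_mass[of j], of "A $ i $ j"] by simp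
qed simp

lemma U_has_derivative: "r > 0 \<Longrightarrow> (U i has_real_derivative - mass i r / r) (at r)"
  unfolding mass_def
  by (rule radial_solution_integral_form(1)[OF C2 _ continuous_on_source])
     (use equation in \<open>simp add: source_def eq_neg_iff_add_eq_0\<close>)

lemma U_eq: "r > 0 \<Longrightarrow> U i r = U i 0 - ln r * mass i r + log_moment i r"
  unfolding mass_def log_moment_def
  by (rule radial_solution_integral_form(2)[OF C2 _ continuous_on_source])
     (use equation in \<open>simp add: source_def eq_neg_iff_add_eq_0\<close>)

lemma mass_tendsto: "(\<lambda>n. mass i (real n)) \<longlonglongrightarrow> total_mass i"
proof -
  have "(\<lambda>n. 2 * pi * mass i (real n)) \<longlonglongrightarrow> 2 * pi * total_mass i"
    unfolding mass_def total_mass_def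
    using integral_radial_tendsto[OF continuous_on_source _ source_integrable] source_nonneg by simp
  then show ?thesis using tendsto_mult_left[where c="1 / (2 * pi)"] by fastforce
qed

lemma mass_le_total_mass: "R \<ge> 0 \<Longrightarrow> mass i R \<le> total_mass i"
  using integral_radial_le[OF continuous_on_source _ source_integrable]
  by (simp add: mass_def total_mass_def source_nonneg field_simps)

lemma mass_mono:
  assumes "0 \<le> a" "a \<le> b"
  shows "mass i a \<le> mass i b"
  unfolding mass_def
proof (rule integral_subset_le)
  have "(\<lambda>s. s * source i s) integrable_on {0..b}"
    by (intro integrable_continuous_real continuous_intros continuous_on_subset[OF continuous_on_source]) auto
  then show "(\<lambda>s. s * source i s) integrable_on {0..b}" "(\<lambda>s. s * source i s) integrable_on {0..a}"
    using assms by (auto intro: integrable_on_subinterval)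
qed (use assms source_nonneg in auto)

lemma U_plus_log_mono:
  assumes "0 < a" "a \<le> b" and "\<And>x. a \<le> x \<Longrightarrow> x \<le> b \<Longrightarrow> mass i x \<le> q"
  shows "U i a + q * ln a \<le> U i b + q * ln b"
proof (rule DERIV_nonneg_imp_nondecreasing[OF assms(2)])
  fix x assume x: "a \<le> x" "x \<le> b"
  then have "x > 0" using assms by linarith
  then have "((\<lambda>r. U i r + q * ln r) has_real_derivative (q - mass i x) / x) (at x)"
    by (auto intro!: derivative_eq_intros U_has_derivative simp: diff_divide_distrib)
  moreover have "(q - mass i x) / x \<ge> 0" using assms(3)[OF x] \<open>x > 0\<close> by simp
  ultimately show "\<exists>y. ((\<lambda>r. U i r + q * ln r) has_real_derivative y) (at x) \<and> 0 \<le> y" by blast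
qed

lemma U_plus_log_antimono:
  assumes "0 < a" "a \<le> b" and "\<And>x. a \<le> x \<Longrightarrow> x \<le> b \<Longrightarrow> q \<le> mass i x"
  shows "U i b + q * ln b \<le> U i a + q * ln a"
proof (rule DERIV_nonpos_imp_nonincreasing[OF assms(2)])
  fix x assume x: "a \<le> x" "x \<le> b"
  then have "x > 0" using assms by linarith
  then have "((\<lambda>r. U i r + q * ln r) has_real_derivative (q - mass i x) / x) (at x)"
    by (auto intro!: derivative_eq_intros U_has_derivative simp: diff_divide_distrib)
  moreover have "(q - mass i x) / x \<le> 0" using assms(3)[OF x] \<open>x > 0\<close> by (simp add: divide_nonpos_pos)
  ultimately show "\<exists>y. ((\<lambda>r. U i r + q * ln r) has_real_derivative y) (at x) \<and> y \<le> 0" by blast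
qed

text \<open>If \<open>total_mass k \<le> 2\<close>, then \<open>s * exp (U k s) \<ge> c / s\<close>, contradicting the finite mass of \<open>exp (U k)\<close>.\<close>
lemma total_mass_gt_two: "total_mass k > 2"
proof (rule ccontr)
  assume "\<not> total_mass k > 2"
  then have mk: "total_mass k \<le> 2" by simp
  define c where "c = exp (U k 1)"
  have c: "c > 0" by (simp add: c_def)
  have low: "c / s \<le> s * exp (U k s)" if s: "s \<ge> 1" for s
  proof -
    have "U k 1 - total_mass k * ln s \<le> U k s"
      using U_plus_log_mono[of 1 s k "total_mass k"] s mass_le_total_mass by simp
    moreover have "c * s powr (- total_mass k) = exp (U k 1 - total_mass k * ln s)"
      using s by (simp add: c_def powr_def exp_diff exp_minus field_simps)
    ultimately have "c * s powr (- total_mass k) \<le> exp (U k s)" by simp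
    moreover have "s powr (-2) \<le> s powr (- total_mass k)"
      using s mk by (intro powr_mono) auto
    ultimately have "c * s powr (-2) \<le> exp (U k s)"
      using c by (smt (verit) mult_left_mono)
    then have "s * (c * s powr (-2)) \<le> s * exp (U k s)" using s by (simp add: mult_left_mono)
    moreover have "s * (c * s powr (-2)) = c / s"
      using s by (simp add: powr_minus power2_eq_square field_simps)
    ultimately show ?thesis by simp
  qed
  have "\<exists>R\<ge>0. 1 / (2 * pi) * integral UNIV (\<lambda>x::real^2. exp (U k (norm x)))
                  < integral {0..R} (\<lambda>s. s * exp (U k s))"
  proof (rule integral_Icc_unbounded_of_inverse_lower_bound[OF _ _ c low])
    show "continuous_on {0..} (\<lambda>s. s * exp (U k s))"
      by (intro continuous_intros continuous_on_exp_U)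
  qed simp
  then obtain R where "R \<ge> 0"
    "1 / (2 * pi) * integral UNIV (\<lambda>x::real^2. exp (U k (norm x))) < integral {0..R} (\<lambda>s. s * exp (U k s))"
    by blast
  moreover have "2 * pi * integral {0..R} (\<lambda>s. s * exp (U k s)) \<le> integral UNIV (\<lambda>x::real^2. exp (U k (norm x)))"
    using integral_radial_le[OF continuous_on_exp_U _ finite_mass \<open>R \<ge> 0\<close>] by simp
  ultimately show False by (simp add: field_simps)
qed

definition min_mass :: real where
  "min_mass = (MIN k. total_mass k)"

lemma min_mass_le: "min_mass \<le> total_mass k"
  unfolding min_mass_def by (rule Min_le) auto

lemma min_mass_gt_two: "min_mass > 2"
proof -
  have "min_mass \<in> range total_mass" unfolding min_mass_def by (rule Min_in) auto
  then show ?thesis using total_mass_gt_two by auto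
qed

lemma exp_U_decay:
  assumes "q < total_mass k"
  shows "\<exists>R\<ge>1. \<exists>C. \<forall>s\<ge>R. exp (U k s) \<le> C * s powr (- q)"
proof -
  obtain N where N: "\<And>n. n \<ge> N \<Longrightarrow> q < mass k (real n)"
    using order_tendstoD(1)[OF mass_tendsto assms] unfolding eventually_sequentially by blast
  define R where "R = max 1 (real N)"
  have "exp (U k s) \<le> exp (U k R + q * ln R) * s powr (- q)" if s: "s \<ge> R" for s
  proof -
    have "q \<le> mass k x" if "R \<le> x" for x
      using N[of N] mass_mono[of "real N" x k] that by (simp add: R_def)
    then have "U k s + q * ln s \<le> U k R + q * ln R"
      using U_plus_log_antimono[OF _ s] by (simp add: R_def)
    then have "exp (U k s) \<le> exp (U k R + q * ln R - q * ln s)" by simp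
    also have "\<dots> = exp (U k R + q * ln R) * s powr (- q)"
      using s by (simp add: powr_def R_def exp_diff exp_minus field_simps)
    finally show ?thesis .
  qed
  then show ?thesis by (intro exI[of _ R] conjI exI) (auto simp: R_def)
qed

lemma source_decay:
  assumes "q < min_mass"
  shows "\<exists>R\<ge>1. \<exists>K. \<forall>s\<ge>R. source i s \<le> K * s powr (- q)"
proof -
  have "\<exists>R C. R \<ge> 1 \<and> (\<forall>s\<ge>R. exp (U j s) \<le> C * s powr (- q))" for j
    using exp_U_decay[of q j] assms min_mass_le[of j] by auto
  then obtain R C where R: "\<And>j. R j \<ge> 1" and C: "\<And>j s. s \<ge> R j \<Longrightarrow> exp (U j s) \<le> C j * s powr (- q)"
    by metis
  define R0 where "R0 = Max (range R)"
  have R0: "R j \<le> R0" for j unfolding R0_def by (rule Max_ge) auto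
  have "source i s \<le> (\<Sum>j\<in>UNIV. A $ i $ j * C j) * s powr (- q)" if "s \<ge> R0" for s
  proof -
    have "exp (U j s) \<le> C j * s powr (- q)" for j using C[of j s] R0[of j] that by simp
    then have "source i s \<le> (\<Sum>j\<in>UNIV. A $ i $ j * (C j * s powr (- q)))"
      unfolding source_def using coeff_nonneg by (intro sum_mono mult_left_mono) auto
    then show ?thesis by (simp add: sum_distrib_right mult.assoc)
  qed
  moreover have "R0 \<ge> 1" using R[of undefined] R0[of undefined] by linarith
  ultimately show ?thesis by blast
qed

text \<open>With \<open>source i s = O(s powr -q)\<close> for some \<open>q > 2\<close>, the integrand \<open>ln s * source i s * s\<close>
  is \<open>O(s powr (-1 - p))\<close> with \<open>p = (q - 2) / 2\<close>, because \<open>ln s \<le> s powr p / p\<close>.\<close>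
lemma log_moment_tendsto: "(\<lambda>n. log_moment i (real n)) \<longlonglongrightarrow> total_log_moment i"
proof -
  define q where "q = (min_mass + 2) / 2"
  define p where "p = (q - 2) / 2"
  have p: "p > 0" and q: "q < min_mass" using min_mass_gt_two by (simp_all add: p_def q_def)
  obtain R K where R: "R \<ge> 1" and K: "\<And>s. s \<ge> R \<Longrightarrow> source i s \<le> K * s powr (- q)"
    using source_decay[OF q] by blast
  have "\<bar>ln s * source i s * s\<bar> \<le> K / p * s powr (-1 - p)" if s: "s \<ge> R" for s
  proof -
    have "p * ln s = ln (s powr p)" using s R by (simp add: ln_powr)
    also have "\<dots> \<le> s powr p" using s R by (intro ln_le_minus_one[THEN order_trans]) auto
    finally have ln_le: "ln s \<le> s powr p / p" using p by (simp add: field_simps)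
    have "\<bar>ln s * source i s * s\<bar> = ln s * (source i s * s)"
      using s R source_nonneg[of i s] by simp
    also have "\<dots> \<le> (s powr p / p) * (K * s powr (- q) * s)"
    proof (intro mult_mono mult_right_mono)
      show "0 \<le> K * s powr (- q)" using source_nonneg[of i s] K[OF s] by linarith
    qed (use s R source_nonneg K[OF s] ln_le p in auto)
    also have "\<dots> = K / p * (s powr p * s powr (- q) * s powr 1)" using s R by simp
    also have "s powr p * s powr (- q) * s powr 1 = s powr (-1 - p)"
      by (simp only: powr_add[symmetric]) (simp add: p_def field_simps)
    finally show ?thesis .
  qed
  moreover have c: "continuous_on {0..} (\<lambda>s. ln s * source i s * s)"
    using continuous_on_mult[OF continuous_on_ln_times_id continuous_on_source]
    by (simp add: mult_ac)
  ultimately obtain g where "g integrable_on {0..}" "\<And>s. s \<ge> 0 \<Longrightarrow> \<bar>ln s * source i s * s\<bar> \<le> g s"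
    using powr_decay_integrable_majorant[OF _ p, where R=R and K="K / p"] R by auto
  then show ?thesis
    unfolding log_moment_def total_log_moment_def by (rule integral_Icc_tendsto_integral_Ioi[OF c])
qed

definition remainder :: "'n \<Rightarrow> real \<Rightarrow> real" where
  "remainder i r = U i r - U i 0 + total_mass i * ln r - total_log_moment i"

definition decay_coeff :: "'n \<Rightarrow> real" where
  "decay_coeff i = exp (total_log_moment i + U i 0)"

lemma remainder_eq:
  "r > 0 \<Longrightarrow> remainder i r = ln r * (total_mass i - mass i r) - (total_log_moment i - log_moment i r)"
  using U_eq[of r i] by (simp add: remainder_def algebra_simps)

lemma s_exp_U_eq:
  assumes "s > 0"
  shows "s * exp (U k s) = decay_coeff k * s powr (1 - total_mass k) * exp (remainder k s)"
proof -
  have "decay_coeff k * s powr (1 - total_mass k) * exp (remainder k s)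
      = exp ((total_log_moment k + U k 0) + (1 - total_mass k) * ln s + remainder k s)"
    using assms by (simp add: decay_coeff_def powr_def exp_add)
  also have "\<dots> = exp (ln s + U k s)" by (simp add: remainder_def algebra_simps)
  also have "\<dots> = s * exp (U k s)" using assms by (simp add: exp_add)
  finally show ?thesis by simp
qed

lemma continuous_on_tail_integrand:
  "r > 0 \<Longrightarrow> continuous_on {r..} (\<lambda>s. (ln s - ln r) * (s * source i s))"
  by (intro continuous_intros continuous_on_subset[OF continuous_on_source]) auto

lemma tail_integral_eq:
  assumes r: "0 < r" and rR: "r \<le> R"
  shows "integral {r..R} (\<lambda>s. (ln s - ln r) * (s * source i s))
           = (log_moment i R - log_moment i r) - ln r * (mass i R - mass i r)"
proof -
  have c: "continuous_on {0..R} (source i)"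
    by (rule continuous_on_subset[OF continuous_on_source]) auto
  have c1: "continuous_on {0..R} (\<lambda>s. s * source i s)" by (intro continuous_intros c)
  have c2: "continuous_on {0..R} (\<lambda>s. ln s * source i s * s)"
    using continuous_on_mult[OF continuous_on_subset[OF continuous_on_ln_times_id] c]
    by (simp add: mult_ac)
  have i1: "(\<lambda>s. s * source i s) integrable_on {r..R}"
    and i2: "(\<lambda>s. ln s * source i s * s) integrable_on {r..R}"
    using r by (auto intro!: integrable_on_subinterval[OF integrable_continuous_real] c1 c2)
  have "integral {r..R} (\<lambda>s. (ln s - ln r) * (s * source i s))
      = integral {r..R} (\<lambda>s. ln s * source i s * s - ln r * (s * source i s))"
    by (rule integral_cong) (simp add: algebra_simps)
  also have "\<dots> = integral {r..R} (\<lambda>s. ln s * source i s * s) - ln r * integral {r..R} (\<lambda>s. s * source i s)"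
    using Henstock_Kurzweil_Integration.integral_diff[OF i2 integrable_on_cmult_left[OF i1]]
    by (simp add: integral_mult)
  also have "integral {r..R} (\<lambda>s. s * source i s) = mass i R - mass i r"
    using Henstock_Kurzweil_Integration.integral_combine[OF _ rR integrable_continuous_real[OF c1]] r
    by (simp add: mass_def)
  also have "integral {r..R} (\<lambda>s. ln s * source i s * s) = log_moment i R - log_moment i r"
    using Henstock_Kurzweil_Integration.integral_combine[OF _ rR integrable_continuous_real[OF c2]] r
    by (simp add: log_moment_def)
  finally show ?thesis .
qed

lemma remainder_tail_tendsto:
  assumes r: "r > 0"
  shows "(\<lambda>n. integral {r..real n} (\<lambda>s. (ln s - ln r) * (s * source i s))) \<longlonglongrightarrow> - remainder i r"
proof -
  have "(\<lambda>n. (log_moment i (real n) - log_moment i r) - ln r * (mass i (real n) - mass i r))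
          \<longlonglongrightarrow> (total_log_moment i - log_moment i r) - ln r * (total_mass i - mass i r)"
    by (intro tendsto_intros mass_tendsto log_moment_tendsto)
  moreover obtain N :: nat where N: "r \<le> real N" using real_arch_simple by blast
  have "\<forall>\<^sub>F n in sequentially. (log_moment i (real n) - log_moment i r) - ln r * (mass i (real n) - mass i r)
          = integral {r..real n} (\<lambda>s. (ln s - ln r) * (s * source i s))"
    unfolding eventually_sequentially
  proof (intro exI allI impI)
    fix n assume "N \<le> n"
    with N have "r \<le> real n" by linarith
    from tail_integral_eq[OF r this] show "(log_moment i (real n) - log_moment i r)
        - ln r * (mass i (real n) - mass i r) = integral {r..real n} (\<lambda>s. (ln s - ln r) * (s * source i s))"
      by simp
  qed
  ultimately show ?thesis by (simp add: Lim_transform_eventually remainder_eq[OF r])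
qed

lemma remainder_nonpos:
  assumes r: "r > 0"
  shows "remainder i r \<le> 0"
proof -
  have "0 \<le> - remainder i r"
  proof (rule LIMSEQ_le_const[OF remainder_tail_tendsto[OF r]], intro exI allI impI)
    show "0 \<le> integral {r..real n} (\<lambda>s. (ln s - ln r) * (s * source i s))" for n
      using r source_nonneg
      by (intro integral_nonneg integrable_continuous_real continuous_on_subset[OF continuous_on_tail_integrand])
         auto
  qed
  then show ?thesis by simp
qed

lemma s_exp_U_le:
  assumes s: "s \<ge> 1"
  shows "s * exp (U j s) \<le> decay_coeff j * s powr (1 - min_mass)"
proof -
  have "s * exp (U j s) = decay_coeff j * s powr (1 - total_mass j) * exp (remainder j s)"
    using s by (intro s_exp_U_eq) simp
  also have "\<dots> \<le> decay_coeff j * s powr (1 - total_mass j)"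
    using remainder_nonpos[of s j] s by (simp add: decay_coeff_def)
  also have "\<dots> \<le> decay_coeff j * s powr (1 - min_mass)"
    using s min_mass_le[of j] by (simp add: decay_coeff_def powr_mono)
  finally show ?thesis .
qed

definition remainder_const :: "'n \<Rightarrow> real" where
  "remainder_const i = (\<Sum>j\<in>UNIV. A $ i $ j * decay_coeff j) / (min_mass - 2)^2"

lemma remainder_const_nonneg: "remainder_const i \<ge> 0"
  unfolding remainder_const_def decay_coeff_def using coeff_nonneg
  by (intro divide_nonneg_nonneg sum_nonneg mult_nonneg_nonneg) auto

lemma remainder_bound:
  assumes r: "r \<ge> 1"
  shows "- remainder i r \<le> remainder_const i * r powr (2 - min_mass)"
proof -
  have p: "min_mass - 2 > 0" using min_mass_gt_two by simp
  have r0: "r > 0" using r by simp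
  have "- remainder i r \<le> (\<Sum>j\<in>UNIV. A $ i $ j * decay_coeff j) * (r powr (- (min_mass - 2)) / (min_mass - 2)^2)"
  proof (rule log_weighted_tail_bounds(2)[OF p r0 continuous_on_tail_integrand[OF r0] _
        remainder_tail_tendsto[OF r0]])
    fix s assume s: "s \<ge> r"
    have "s * source i s = (\<Sum>j\<in>UNIV. A $ i $ j * (s * exp (U j s)))"
      by (simp add: source_def sum_distrib_left mult_ac)
    also have "\<dots> \<le> (\<Sum>j\<in>UNIV. A $ i $ j * (decay_coeff j * s powr (-1 - (min_mass - 2))))"
      using coeff_nonneg s_exp_U_le r s by (intro sum_mono mult_left_mono) auto
    finally have "s * source i s \<le> (\<Sum>j\<in>UNIV. A $ i $ j * decay_coeff j) * s powr (-1 - (min_mass - 2))"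
      by (simp add: sum_distrib_right mult.assoc)
    moreover have L: "0 \<le> ln s - ln r" using r s by simp
    ultimately have "(ln s - ln r) * (s * source i s)
        \<le> (ln s - ln r) * ((\<Sum>j\<in>UNIV. A $ i $ j * decay_coeff j) * s powr (-1 - (min_mass - 2)))"
      by (rule mult_left_mono)
    then show "0 \<le> (ln s - ln r) * (s * source i s) \<and>
        (ln s - ln r) * (s * source i s)
          \<le> (\<Sum>j\<in>UNIV. A $ i $ j * decay_coeff j) * ((ln s - ln r) * s powr (-1 - (min_mass - 2)))"
      using L r s source_nonneg[of i s] by (simp add: mult_ac)
  qed
  also have "\<dots> = remainder_const i * r powr (2 - min_mass)"
    by (simp add: remainder_const_def)
  finally show ?thesis .
qed

definition deficit :: "'n \<Rightarrow> real \<Rightarrow> real" where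
  "deficit j s = decay_coeff j * s powr (1 - total_mass j) - s * exp (U j s)"

lemma deficit_bounds:
  assumes s: "s \<ge> 1"
  shows "0 \<le> deficit j s \<and> deficit j s \<le> decay_coeff j * remainder_const j * s powr (3 - 2 * min_mass)"
proof -
  have s0: "s > 0" using s by simp
  have eq: "deficit j s = decay_coeff j * s powr (1 - total_mass j) * (1 - exp (remainder j s))"
    using s_exp_U_eq[OF s0, of j] by (simp add: deficit_def algebra_simps)
  have "0 \<le> 1 - exp (remainder j s)" using remainder_nonpos[OF s0, of j] by simp
  moreover have "1 - exp (remainder j s) \<le> remainder_const j * s powr (2 - min_mass)"
    using remainder_bound[OF s, of j] exp_ge_add_one_self[of "remainder j s"] by linarith
  moreover have "0 \<le> decay_coeff j * s powr (1 - total_mass j)"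
    and "decay_coeff j * s powr (1 - total_mass j) \<le> decay_coeff j * s powr (1 - min_mass)"
    using s min_mass_le[of j] by (auto simp: decay_coeff_def powr_mono)
  ultimately have "0 \<le> deficit j s \<and>
      deficit j s \<le> decay_coeff j * s powr (1 - min_mass) * (remainder_const j * s powr (2 - min_mass))"
    unfolding eq by (auto intro!: mult_mono remainder_const_nonneg)
  moreover have "s powr (1 - min_mass) * s powr (2 - min_mass) = s powr (3 - 2 * min_mass)"
    by (simp add: powr_add[symmetric] algebra_simps)
  ultimately show ?thesis by (simp add: mult_ac)
qed

definition expansion_error :: "'n \<Rightarrow> real \<Rightarrow> real" where
  "expansion_error i r = remainder i r
     + (\<Sum>j\<in>UNIV. A $ i $ j / (total_mass j - 2)^2 * decay_coeff j * r powr (2 - total_mass j))"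

lemma weighted_deficit_sum_eq:
  "(ln s - ln r) * (\<Sum>j\<in>UNIV. A $ i $ j * deficit j s)
     = (\<Sum>j\<in>UNIV. A $ i $ j * decay_coeff j * ((ln s - ln r) * s powr (-1 - (total_mass j - 2))))
       - (ln s - ln r) * (s * source i s)"
proof -
  have "(ln s - ln r) * (\<Sum>j\<in>UNIV. A $ i $ j * deficit j s)
      = (\<Sum>j\<in>UNIV. A $ i $ j * decay_coeff j * ((ln s - ln r) * s powr (-1 - (total_mass j - 2)))
          - (ln s - ln r) * (s * (A $ i $ j * exp (U j s))))"
    unfolding sum_distrib_left by (intro sum.cong refl) (simp add: deficit_def algebra_simps)
  then show ?thesis by (simp add: source_def sum_subtractf sum_distrib_left)
qed

lemma deficit_tail_integral_eq:
  assumes r: "r > 0"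
  shows "integral {r..R} (\<lambda>s. (ln s - ln r) * (\<Sum>j\<in>UNIV. A $ i $ j * deficit j s))
      = (\<Sum>j\<in>UNIV. A $ i $ j * decay_coeff j
           * integral {r..R} (\<lambda>s. (ln s - ln r) * s powr (-1 - (total_mass j - 2))))
        - integral {r..R} (\<lambda>s. (ln s - ln r) * (s * source i s))"
proof -
  have ipow: "(\<lambda>s. (ln s - ln r) * s powr e) integrable_on {r..R}" for e
    using r by (intro integrable_continuous_real continuous_intros) auto
  have itail: "(\<lambda>s. (ln s - ln r) * (s * source i s)) integrable_on {r..R}"
    by (intro integrable_continuous_real continuous_on_subset[OF continuous_on_tail_integrand[OF r]]) auto
  have "integral {r..R} (\<lambda>s. (ln s - ln r) * (\<Sum>j\<in>UNIV. A $ i $ j * deficit j s))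
      = integral {r..R} (\<lambda>s. \<Sum>j\<in>UNIV. A $ i $ j * decay_coeff j
            * ((ln s - ln r) * s powr (-1 - (total_mass j - 2))))
        - integral {r..R} (\<lambda>s. (ln s - ln r) * (s * source i s))"
    unfolding weighted_deficit_sum_eq
    by (intro Henstock_Kurzweil_Integration.integral_diff itail integrable_sum)
       (auto intro: integrable_on_cmult_left[OF ipow, simplified])
  also have "integral {r..R} (\<lambda>s. \<Sum>j\<in>UNIV. A $ i $ j * decay_coeff j
            * ((ln s - ln r) * s powr (-1 - (total_mass j - 2))))
      = (\<Sum>j\<in>UNIV. integral {r..R} (\<lambda>s. A $ i $ j * decay_coeff j
            * ((ln s - ln r) * s powr (-1 - (total_mass j - 2)))))"
    by (rule Henstock_Kurzweil_Integration.integral_sum)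
       (auto intro: integrable_on_cmult_left[OF ipow, simplified])
  also have "\<dots> = (\<Sum>j\<in>UNIV. A $ i $ j * decay_coeff j
           * integral {r..R} (\<lambda>s. (ln s - ln r) * s powr (-1 - (total_mass j - 2))))"
    by (intro sum.cong refl integral_mult[OF ipow, symmetric])
  finally show ?thesis .
qed

lemma expansion_error_tail_tendsto:
  assumes r: "r > 0"
  shows "(\<lambda>n. integral {r..real n} (\<lambda>s. (ln s - ln r) * (\<Sum>j\<in>UNIV. A $ i $ j * deficit j s)))
           \<longlonglongrightarrow> expansion_error i r"
proof -
  have "(\<lambda>n. integral {r..real n} (\<lambda>s. (ln s - ln r) * (\<Sum>j\<in>UNIV. A $ i $ j * deficit j s)))
      \<longlonglongrightarrow> (\<Sum>j\<in>UNIV. A $ i $ j * decay_coeff j * (r powr (- (total_mass j - 2)) / (total_mass j - 2)^2))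
          - - remainder i r"
    unfolding deficit_tail_integral_eq[OF r] using total_mass_gt_two
    by (intro tendsto_intros log_powr_integral_tendsto remainder_tail_tendsto r) simp
  moreover have "(\<Sum>j\<in>UNIV. A $ i $ j * decay_coeff j * (r powr (- (total_mass j - 2)) / (total_mass j - 2)^2))
      - - remainder i r = expansion_error i r"
    by (simp add: expansion_error_def algebra_simps)
  ultimately show ?thesis by simp
qed

lemma expansion_error_bounds:
  assumes r: "r \<ge> 1"
  shows "0 \<le> expansion_error i r"
    and "expansion_error i r \<le> (\<Sum>j\<in>UNIV. A $ i $ j * decay_coeff j * remainder_const j)
                                 * (r powr (- (2 * min_mass - 4)) / (2 * min_mass - 4)^2)"
proof -
  have r0: "r > 0" and p: "2 * min_mass - 4 > 0" using r min_mass_gt_two by auto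
  have c: "continuous_on {r..} (\<lambda>s. (ln s - ln r) * (\<Sum>j\<in>UNIV. A $ i $ j * deficit j s))"
    unfolding deficit_def using r0
    by (intro continuous_intros continuous_on_subset[OF continuous_on_exp_U]) auto
  have bnd: "0 \<le> (ln s - ln r) * (\<Sum>j\<in>UNIV. A $ i $ j * deficit j s) \<and>
      (ln s - ln r) * (\<Sum>j\<in>UNIV. A $ i $ j * deficit j s)
        \<le> (\<Sum>j\<in>UNIV. A $ i $ j * decay_coeff j * remainder_const j)
           * ((ln s - ln r) * s powr (-1 - (2 * min_mass - 4)))" if s: "s \<ge> r" for s
  proof -
    have L: "0 \<le> ln s - ln r" using r0 s by simp
    have "0 \<le> (\<Sum>j\<in>UNIV. A $ i $ j * deficit j s)"
      using coeff_nonneg deficit_bounds r s by (intro sum_nonneg mult_nonneg_nonneg) auto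
    moreover have "(\<Sum>j\<in>UNIV. A $ i $ j * deficit j s)
        \<le> (\<Sum>j\<in>UNIV. A $ i $ j * (decay_coeff j * remainder_const j * s powr (-1 - (2 * min_mass - 4))))"
      using coeff_nonneg deficit_bounds r s by (intro sum_mono mult_left_mono) auto
    then have "(ln s - ln r) * (\<Sum>j\<in>UNIV. A $ i $ j * deficit j s)
        \<le> (ln s - ln r) * ((\<Sum>j\<in>UNIV. A $ i $ j * decay_coeff j * remainder_const j)
             * s powr (-1 - (2 * min_mass - 4)))"
      using L by (intro mult_left_mono) (simp_all add: sum_distrib_right mult.assoc)
    ultimately show ?thesis using L by (simp add: mult.left_commute)
  qed
  show "0 \<le> expansion_error i r"
    by (rule log_weighted_tail_bounds(1)[OF p r0 c bnd expansion_error_tail_tendsto[OF r0]])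
  show "expansion_error i r \<le> (\<Sum>j\<in>UNIV. A $ i $ j * decay_coeff j * remainder_const j)
                                 * (r powr (- (2 * min_mass - 4)) / (2 * min_mass - 4)^2)"
    by (rule log_weighted_tail_bounds(2)[OF p r0 c bnd expansion_error_tail_tendsto[OF r0]])
qed

lemma asymptotic_expansion:
  "\<exists>\<delta>>0. \<forall>i. (\<lambda>r. U i r - (- total_mass i * ln r + total_log_moment i + U i 0
        - (\<Sum>j\<in>UNIV. A $ i $ j / (total_mass j - 2)^2 * decay_coeff j * r powr (2 - total_mass j))))
     \<in> O[at_top](\<lambda>r. r powr (2 - min_mass - \<delta>))"
proof -
  have "(\<lambda>r. U i r - (- total_mass i * ln r + total_log_moment i + U i 0
        - (\<Sum>j\<in>UNIV. A $ i $ j / (total_mass j - 2)^2 * decay_coeff j * r powr (2 - total_mass j))))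
     \<in> O[at_top](\<lambda>r. r powr (2 - min_mass - (min_mass - 2)))" for i
  proof -
    have "U i r - (- total_mass i * ln r + total_log_moment i + U i 0
          - (\<Sum>j\<in>UNIV. A $ i $ j / (total_mass j - 2)^2 * decay_coeff j * r powr (2 - total_mass j)))
        = expansion_error i r" for r
      by (simp add: expansion_error_def remainder_def)
    moreover have "norm (expansion_error i r)
        \<le> (\<Sum>j\<in>UNIV. A $ i $ j * decay_coeff j * remainder_const j) / (2 * min_mass - 4)^2
           * norm (r powr (2 - min_mass - (min_mass - 2)))" if r: "r \<ge> 1" for r
    proof -
      have "2 - min_mass - (min_mass - 2) = - (2 * min_mass - 4)" by simp
      then show ?thesis using expansion_error_bounds[OF r, of i] by simp
    qed
    then have "\<forall>\<^sub>F r in at_top. norm (expansion_error i r)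
        \<le> (\<Sum>j\<in>UNIV. A $ i $ j * decay_coeff j * remainder_const j) / (2 * min_mass - 4)^2
           * norm (r powr (2 - min_mass - (min_mass - 2)))"
      unfolding eventually_at_top_linorder by blast
    then have "expansion_error i \<in> O[at_top](\<lambda>r. r powr (2 - min_mass - (min_mass - 2)))"
      by (rule bigoI)
    ultimately show ?thesis by simp
  qed
  moreover have "min_mass - 2 > 0" using min_mass_gt_two by simp
  ultimately show ?thesis by (intro exI[of _ "min_mass - 2"]) blast
qed

end

theorem lemma3p1:
  fixes A :: "real^'n^'n" and U :: "'n \<Rightarrow> real \<Rightarrow> real"
  assumes sym: "transpose A = A"
    and nonneg: "\<forall>i j. A $ i $ j \<ge> 0"
    and irred: "irreducible_matrix A"
    and inv: "invertible A"
    and inv_diag: "\<forall>i. matrix_inv A $ i $ i \<le> 0"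
    and inv_off: "\<forall>i j. i \<noteq> j \<longrightarrow> matrix_inv A $ i $ j \<ge> 0"
    and inv_rows: "\<forall>i. (\<Sum>j\<in>UNIV. matrix_inv A $ i $ j) \<ge> 0"
    and reg: "\<forall>i. C2_plane (\<lambda>x. U i (norm x))"
    and eqn: "\<forall>i x. laplacian (\<lambda>y. U i (norm y)) x
                   + (\<Sum>j\<in>UNIV. A $ i $ j * exp (U j (norm x))) = 0"
    and finite_mass: "\<forall>i. (\<lambda>x::real^2. exp (U i (norm x))) integrable_on UNIV"
    and normalized: "(MAX i. U i 0) = 0"
  defines "ms \<equiv> (\<lambda>i. (1 / (2 * pi)) *
              integral (UNIV :: (real^2) set) (\<lambda>x. \<Sum>j\<in>UNIV. A $ i $ j * exp (U j (norm x))))"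
    and "\<alpha> \<equiv> (\<lambda>i. - U i 0)"
    and "D \<equiv> (\<lambda>i. integral {0<..} (\<lambda>r. ln r * (\<Sum>j\<in>UNIV. A $ i $ j * exp (U j r)) * r))"
  shows "\<exists>\<delta>>0. \<forall>i.
     (\<lambda>r. U i r - (- ms i * ln r + D i - \<alpha> i
        - (\<Sum>j\<in>UNIV. A $ i $ j / (ms j - 2)^2 * exp (D j - \<alpha> j) * r powr (2 - ms j))))
     \<in> O[at_top](\<lambda>r. r powr (2 - (MIN k. ms k) - \<delta>))"
proof -
  interpret radial_Liouville_system A U
    using nonneg reg eqn finite_mass by unfold_locales auto
  have "ms = total_mass" by (rule ext) (simp add: ms_def total_mass_def source_def)
  moreover have "D = total_log_moment" by (rule ext) (simp add: D_def total_log_moment_def source_def)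
  moreover have "(MIN k. total_mass k) = min_mass" by (simp add: min_mass_def)
  ultimately show ?thesis
    using asymptotic_expansion by (simp add: \<alpha>_def decay_coeff_def)
qed

end
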